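(* Let $X$ be an $L$-topological space and $p\in{\rm pt}_L\mathcal O(X)$. If $A$ is a super-compact open set, then ${\rm sub}_{\mathcal O(X)}([A],p)=p(A)$, where $[A]:\mathcal O(X)\to L$ is $[A](B)={\rm sub}_X(A,B)$.
   Context: $L$ is a frame with implication $\to$. ${\rm sub}_X(A,B)=\bigwedge_{x\in X}A(x)\to B(x)$ for $A,B\in L^X$. $L$-topology: $\mathcal O(X)\subseteq L^X$ closed under finite meets and arbitrary joins containing all constants $a_X$. Super-compact: $A\in L^X$ with $\bigvee_xA(x)=1$ and ${\rm sub}_X(A,\bigvee_iV_i)=\bigvee_i{\rm sub}_X(A,V_i)$ for every family of open $V_i$. A point of $\mathcal O(X)$: $p:\mathcal O(X)\to L$ with $p(A\wedge B)=p(A)\wedge p(B)$, $p(\bigvee_iA_i)=\bigvee_ip(A_i)$, $p(\lambda_X)=\lambda$ for $\lambda\in L$; ${\rm pt}_L\mathcal O(X)$ is the set of points; for maps $p,q:\mathcal O(X)\to L$, ${\rm sub}_{\mathcal O(X)}(p,q)=\bigwedge_{B\in\mathcal O(X)}p(B)\to q(B)$. *)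

theory Defs
  imports Main
begin

class frame = complete_lattice +
  assumes inf_Sup_frame: "inf a (Sup S) = Sup ((\<lambda>b. inf a b) ` S)"

definition fimp :: "'l::frame \<Rightarrow> 'l \<Rightarrow> 'l" where
  "fimp a b = Sup {c. inf c a \<le> b}"

definition subX :: "('a \<Rightarrow> 'l::frame) \<Rightarrow> ('a \<Rightarrow> 'l) \<Rightarrow> 'l" where
  "subX A B = (INF x. fimp (A x) (B x))"

definition L_topology :: "('a \<Rightarrow> 'l::frame) set \<Rightarrow> bool" where
  "L_topology T \<longleftrightarrow>
     (\<forall>a. (\<lambda>_. a) \<in> T) \<and>
     (\<forall>A\<in>T. \<forall>B\<in>T. inf A B \<in> T) \<and>
     (\<forall>S. S \<subseteq> T \<longrightarrow> Sup S \<in> T)"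

definition super_compact :: "('a \<Rightarrow> 'l::frame) set \<Rightarrow> ('a \<Rightarrow> 'l) \<Rightarrow> bool" where
  "super_compact T A \<longleftrightarrow>
     (SUP x. A x) = top \<and>
     (\<forall>(I::('a \<Rightarrow> 'l) set) V. (\<forall>i\<in>I. V i \<in> T) \<longrightarrow>
        subX A (SUP i\<in>I. V i) = (SUP i\<in>I. subX A (V i)))"

definition pt :: "('a \<Rightarrow> 'l::frame) set \<Rightarrow> (('a \<Rightarrow> 'l) \<Rightarrow> 'l) set" where
  "pt T = {p. (\<forall>A\<in>T. \<forall>B\<in>T. p (inf A B) = inf (p A) (p B)) \<and>
             (\<forall>S. S \<subseteq> T \<longrightarrow> p (Sup S) = Sup (p ` S)) \<and>
             (\<forall>a. p (\<lambda>_. a) = a)}"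

definition subO :: "('a \<Rightarrow> 'l::frame) set \<Rightarrow> (('a \<Rightarrow> 'l) \<Rightarrow> 'l) \<Rightarrow> (('a \<Rightarrow> 'l) \<Rightarrow> 'l) \<Rightarrow> 'l" where
  "subO T p q = (INF B\<in>T. fimp (p B) (q B))"

end

theory Submission
  imports Defs
begin

text \<open>Taking \<open>B = A\<close> in the meet gives the upper bound \<open>1 \<rightarrow> p(A) = p(A)\<close>. Conversely,
  by modus ponens \<open>A \<and> c \<le> B\<close> pointwise for the constant \<open>c = sub\<^sub>X(A,B)\<close>; as \<open>p\<close> preserves
  constants and finite meets, hence is monotone on opens, \<open>p(A) \<and> c \<le> p(B)\<close> for every open \<open>B\<close>.\<close>

lemma le_fimp_iff: "(c::'l::frame) \<le> fimp a b \<longleftrightarrow> inf c a \<le> b"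
proof
  assume "c \<le> fimp a b"
  then have "inf c a \<le> inf a (fimp a b)" by (metis inf_commute inf_mono order_refl)
  also have "\<dots> = Sup ((\<lambda>d. inf a d) ` {d. inf d a \<le> b})"
    unfolding fimp_def by (rule inf_Sup_frame)
  also have "\<dots> \<le> b" by (auto intro: Sup_least simp: inf_commute)
  finally show "inf c a \<le> b" .
next
  assume "inf c a \<le> b"
  then show "c \<le> fimp a b" unfolding fimp_def by (simp add: Sup_upper)
qed

lemma inf_fimp_le: "inf (fimp a b) (a::'l::frame) \<le> b"
  using le_fimp_iff by blast

lemma fimp_top_left [simp]: "fimp (top::'l::frame) b = b"
  by (metis antisym inf_fimp_le inf_top_right le_fimp_iff order_refl)

lemma fimp_self [simp]: "fimp (a::'l::frame) a = top"
  by (rule top_le) (simp add: le_fimp_iff)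

lemma subX_self [simp]: "subX A A = top"
  by (simp add: subX_def)

lemma inf_subX_le: "inf (\<lambda>_. subX A B) A \<le> B"
proof (rule le_funI)
  fix x
  have "subX A B \<le> fimp (A x) (B x)" unfolding subX_def by (rule INF_lower) simp
  then show "inf (\<lambda>_. subX A B) A x \<le> B x" by (simp add: le_fimp_iff)
qed

lemma pt_inf:
  assumes "p \<in> pt T" "X \<in> T" "Y \<in> T"
  shows "p (inf X Y) = inf (p X) (p Y)"
  using assms unfolding pt_def by blast

lemma pt_const [simp]: "p \<in> pt T \<Longrightarrow> p (\<lambda>_. a) = a"
  unfolding pt_def by blast

lemma pt_mono:
  assumes "p \<in> pt T" "X \<in> T" "Y \<in> T" "X \<le> Y"
  shows "p X \<le> p Y"
proof -
  have "p X = p (inf X Y)" using \<open>X \<le> Y\<close> by (simp add: inf_absorb1)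
  also have "\<dots> = inf (p X) (p Y)" using assms(1-3) by (rule pt_inf)
  finally show ?thesis by (metis inf.orderI)
qed

lemma pt_inf_subX_le:
  assumes "L_topology T" "p \<in> pt T" "A \<in> T" "B \<in> T"
  shows "inf (p A) (subX A B) \<le> p B"
proof -
  have const_open: "(\<lambda>_. subX A B) \<in> T" and meet_open: "inf (\<lambda>_. subX A B) A \<in> T"
    using assms(1,3) unfolding L_topology_def by auto
  have "inf (p A) (subX A B) = p (inf (\<lambda>_. subX A B) A)"
    using pt_inf[OF assms(2) const_open assms(3)] assms(2) by (simp add: inf_commute)
  also have "\<dots> \<le> p B"
    using assms(2) meet_open assms(4) inf_subX_le by (rule pt_mono)
  finally show ?thesis .
qed

theorem lemma5p9:
  fixes T :: "('a \<Rightarrow> 'l::frame) set" and A :: "'a \<Rightarrow> 'l" and p :: "('a \<Rightarrow> 'l) \<Rightarrow> 'l"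
  assumes "L_topology T"
    and "p \<in> pt T"
    and "A \<in> T"
    and "super_compact T A"
  shows "subO T (\<lambda>B. subX A B) p = p A"
  unfolding subO_def
proof (rule antisym)
  show "(INF B\<in>T. fimp (subX A B) (p B)) \<le> p A"
    using INF_lower[OF assms(3), of "\<lambda>B. fimp (subX A B) (p B)"] by simp
  show "p A \<le> (INF B\<in>T. fimp (subX A B) (p B))"
    using pt_inf_subX_le[OF assms(1-3)] by (simp add: INF_greatest le_fimp_iff)
qed

end
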